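(* Let $n\ge m\ge 0$ be integers with $n-m\equiv 1 \pmod 2$. Then $$\int_{-\infty}^{\infty} f_n(x) f_m(x)\,dx = \frac{1}{2}\binom{n+m+1}{\frac{n+m+1}{2}}.$$
   Context: For $A\subseteq\mathbb{R}$, $\chi_A$ denotes the characteristic function of $A$. Define functions $f_n:\mathbb{R}\to\mathbb{R}$, $n = 0,1,2,\dots$, recursively by $f_0 = \chi_{(-1/2,1/2)}$ and $f_{n+1}(x) = f_n(x+1/2) + f_n(x-1/2)$ for all $x\in\mathbb{R}$. *)

theory Defs
  imports "HOL-Analysis.Analysis"
begin

primrec f :: "nat \<Rightarrow> real \<Rightarrow> real" where
  "f 0 = indicator {-1/2<..<1/2}"
| "f (Suc n) = (\<lambda>x. f n (x + 1/2) + f n (x - 1/2))"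

end

theory Submission
  imports Defs
begin

text \<open>Induction on n writes f_n as a binomially weighted sum of unit windows,
  f_n = \<Sum>_k C(n,k) \<chi>(k - n/2 - 1/2, k - n/2 + 1/2).
  Translation invariance of Lebesgue measure moves a shift by 1/2 from one factor of the
  integrand to the other, so \<integral> f_(n+1) f_m = \<integral> f_n f_(m+1) and hence
  \<integral> f_n f_m = \<integral> f_0 f_(n+m). For n + m = 2p + 1 the window expansion shows that
  f_(2p+1) is C(2p+1,p) on (-1/2,0) and C(2p+1,p+1) on (0,1/2), and Pascal's rule adds the
  two halves up to C(2p+2,p+1)/2.\<close>

definition window :: "nat \<Rightarrow> nat \<Rightarrow> real set" where
  "window n k = {real k - real n / 2 - 1/2 <..< real k - real n / 2 + 1/2}"

lemma plus_half_in_window_iff: "x + 1/2 \<in> window n k \<longleftrightarrow> x \<in> window (Suc n) k"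
  by (auto simp: window_def field_simps)

lemma minus_half_in_window_iff: "x - 1/2 \<in> window n k \<longleftrightarrow> x \<in> window (Suc n) (Suc k)"
  by (auto simp: window_def field_simps)

lemma window_disjoint: "x \<in> window n k \<Longrightarrow> x \<in> window n j \<Longrightarrow> k = j"
  by (auto simp: window_def)

lemma f_binomial_expansion: "f n x = (\<Sum>k\<le>n. real (n choose k) * indicator (window n k) x)"
proof (induction n arbitrary: x)
  case 0
  then show ?case by (simp add: window_def)
next
  case (Suc n)
  let ?w = "\<lambda>k. indicator (window (Suc n) k) x :: real"
  have "f (Suc n) x = (\<Sum>k\<le>n. real (n choose k) * ?w k) + (\<Sum>k\<le>n. real (n choose k) * ?w (Suc k))"
    by (simp add: Suc indicator_def plus_half_in_window_iff minus_half_in_window_iff)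
  also have "(\<Sum>k\<le>n. real (n choose k) * ?w k) = (\<Sum>k\<le>Suc n. real (n choose k) * ?w k)"
    by simp
  also have "(\<Sum>k\<le>n. real (n choose k) * ?w (Suc k))
      = (\<Sum>k\<le>Suc n. real (if k = 0 then 0 else n choose (k - 1)) * ?w k)"
    by (simp add: sum.atMost_Suc_shift del: sum.atMost_Suc)
  also have "(\<Sum>k\<le>Suc n. real (n choose k) * ?w k)
      + (\<Sum>k\<le>Suc n. real (if k = 0 then 0 else n choose (k - 1)) * ?w k)
      = (\<Sum>k\<le>Suc n. real (Suc n choose k) * ?w k)"
    unfolding sum.distrib[symmetric]
    by (intro sum.cong) (auto simp: distrib_right[symmetric] binomial_eq_0 gr0_conv_Suc)
  finally show ?case .
qed

lemma f_on_window:
  assumes "k \<le> n" and "x \<in> window n k"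
  shows "f n x = real (n choose k)"
proof -
  have "f n x = (\<Sum>j\<le>n. if j = k then real (n choose k) else 0)"
    unfolding f_binomial_expansion
    using assms(2) by (intro sum.cong) (auto simp: indicator_def dest: window_disjoint)
  then show ?thesis
    using assms(1) by simp
qed

lemma f_nonneg: "0 \<le> f n x"
  by (induction n arbitrary: x) (auto simp: add_nonneg_nonneg)

lemma f_le_power: "f n x \<le> 2 ^ n"
proof (induction n arbitrary: x)
  case (Suc n)
  from Suc[of "x + 1/2"] Suc[of "x - 1/2"] show ?case by simp
qed simp

lemma f_measurable [measurable]: "f n \<in> borel_measurable borel"
proof (induction n)
  case (Suc n)
  note [measurable] = Suc
  show ?case by simp
qed simp

lemma integrable_indicator_Ioo: "integrable lborel (indicator {a<..<b} :: real \<Rightarrow> real)"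
  by (intro integrable_real_indicator emeasure_bounded_finite) auto

lemma integrable_f: "integrable lborel (f n)"
proof (induction n)
  case 0
  then show ?case by (simp add: integrable_indicator_Ioo)
next
  case (Suc n)
  have "integrable lborel (\<lambda>x. f n (t + 1 * x))" for t
    using Suc by (rule lborel_integrable_real_affine) simp
  from this[of "1/2"] this[of "-1/2"] show ?case
    by (simp add: add.commute)
qed

lemma integrable_f_shift_mult: "integrable lborel (\<lambda>x. f n (x + a) * f m (x + b))"
proof (rule Bochner_Integration.integrable_bound[where f = "\<lambda>x. 2 ^ m * f n (x + a)"])
  show "integrable lborel (\<lambda>x. 2 ^ m * f n (x + a))"
    using lborel_integrable_real_affine[OF integrable_f[of n], of 1 a] by (simp add: add.commute)
  show "AE x in lborel. norm (f n (x + a) * f m (x + b)) \<le> norm (2 ^ m * f n (x + a))"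
  proof (intro AE_I2)
    fix x
    show "norm (f n (x + a) * f m (x + b)) \<le> norm (2 ^ m * f n (x + a))"
      using mult_left_mono[OF f_le_power[of m "x + b"] f_nonneg[of n "x + a"]]
      by (simp add: f_nonneg abs_mult mult.commute)
  qed
qed measurable

lemma lborel_integral_translate: "(LINT x|lborel. g x) = (LINT x|lborel. g (x + c))"
  for g :: "real \<Rightarrow> real"
  using lborel_integral_real_affine[of 1 g c] by (simp add: add.commute)

definition f_inner :: "nat \<Rightarrow> nat \<Rightarrow> real" where
  "f_inner n m = (LINT x|lborel. f n x * f m x)"

lemma f_inner_Suc_left: "f_inner (Suc n) m = f_inner n (Suc m)"
proof -
  have right: "(LINT x|lborel. f n (x + 1/2) * f m x) = (LINT x|lborel. f n x * f m (x - 1/2))"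
    using lborel_integral_translate[of "\<lambda>x. f n (x + 1/2) * f m x" "-1/2"] by simp
  have left: "(LINT x|lborel. f n (x - 1/2) * f m x) = (LINT x|lborel. f n x * f m (x + 1/2))"
    using lborel_integral_translate[of "\<lambda>x. f n (x - 1/2) * f m x" "1/2"] by simp
  have "f_inner (Suc n) m
      = (LINT x|lborel. f n (x + 1/2) * f m x) + (LINT x|lborel. f n (x - 1/2) * f m x)"
    unfolding f_inner_def
    using integrable_f_shift_mult[of n "1/2" m 0] integrable_f_shift_mult[of n "-1/2" m 0]
    by (simp add: distrib_right)
  also have "\<dots> = (LINT x|lborel. f n x * f m (x - 1/2)) + (LINT x|lborel. f n x * f m (x + 1/2))"
    by (simp only: right left)
  also have "\<dots> = f_inner n (Suc m)"
    unfolding f_inner_def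
    using integrable_f_shift_mult[of n 0 m "1/2"] integrable_f_shift_mult[of n 0 m "-1/2"]
    by (simp add: distrib_left add.commute)
  finally show ?thesis .
qed

lemma f_inner_eq_f_inner_0: "f_inner n m = f_inner 0 (n + m)"
  by (induction n arbitrary: m) (simp_all add: f_inner_Suc_left)

lemma f_odd_left_half: "x \<in> {-1/2<..<0} \<Longrightarrow> f (Suc (2 * p)) x = real (Suc (2 * p) choose p)"
  by (rule f_on_window) (auto simp: window_def field_simps)

lemma f_odd_right_half: "x \<in> {0<..<1/2} \<Longrightarrow> f (Suc (2 * p)) x = real (Suc (2 * p) choose Suc p)"
  by (rule f_on_window) (auto simp: window_def field_simps)

lemma f_inner_0_odd: "f_inner 0 (2 * p + 1) = real (2 * p + 2 choose (p + 1)) / 2"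
proof -
  let ?a = "real (2 * p + 1 choose p)" and ?b = "real (2 * p + 1 choose (p + 1))"
  let ?g = "\<lambda>x::real. ?a * indicator {-1/2<..<0} x + ?b * indicator {0<..<1/2} x"
  have "AE x in lborel. f 0 x * f (2 * p + 1) x = ?g x"
    \<comment> \<open>the identity fails only at the jump x = 0\<close>
    using AE_lborel_singleton[of 0]
    by eventually_elim
      (auto simp: indicator_def f_odd_left_half f_odd_right_half simp del: f.simps(2) binomial_Suc_Suc)
  then have "f_inner 0 (2 * p + 1) = (LINT x|lborel. ?g x)"
    unfolding f_inner_def by (rule integral_cong_AE[rotated 2]) measurable
  also have "\<dots> = (?a + ?b) / 2"
    by (subst Bochner_Integration.integral_add) (auto simp: integrable_indicator_Ioo)
  also have "?a + ?b = real (2 * p + 2 choose (p + 1))"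
    by (simp add: numeral_2_eq_2)
  finally show ?thesis .
qed

theorem mainTheorem6:
  fixes n m :: nat
  assumes "m \<le> n" and "odd (n - m)"
  shows "(LINT x|lborel. f n x * f m x) = (1/2) * real ((n + m + 1) choose ((n + m + 1) div 2))"
proof -
  from assms obtain p where p: "n + m = 2 * p + 1"
    by (metis add.commute le_add_diff_inverse2 odd_add oddE)
  have "(LINT x|lborel. f n x * f m x) = f_inner 0 (2 * p + 1)"
    using f_inner_eq_f_inner_0[of n m] p by (simp add: f_inner_def)
  also have "\<dots> = real (2 * p + 2 choose (p + 1)) / 2"
    by (rule f_inner_0_odd)
  also have "\<dots> = (1/2) * real ((n + m + 1) choose ((n + m + 1) div 2))"
    using p by simp
  finally show ?thesis .
qed

end
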